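(* Let $N\ge 1$, let $a\in\mathbb{R}^N$ with $a_i\neq 0$ for all $i$, and let $\underline x,\overline x,\underline y,\overline y\in\mathbb{R}^N$ with $\underline x<\overline x$ and $\underline y<\overline y$ componentwise. Let $$\mathcal{S}_a=\Big\{(x,y)\in\mathbb{R}^N\times\mathbb{R}^N:\ \sum_{i=1}^N a_ix_iy_i=0,\ \underline x\le x\le\overline x,\ \underline y\le y\le\overline y\Big\}.$$ Then $\operatorname{conv}(\mathcal{S}_a)$ is second-order cone representable.
   Context: A set $S\subseteq\mathbb{R}^n$ is second-order cone representable if it is the projection onto the first $n$ coordinates of a set $\{(x,u)\in\mathbb{R}^n\times\mathbb{R}^m\}$ defined by finitely many linear equalities/inequalities and constraints of the form $\|A_k(x,u)+b_k\|_2\le c_k^T(x,u)+d_k$. *)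

theory Defs
  imports "HOL-Analysis.Analysis"
begin

text \<open>An affine functional of the lifted variable (x,u), where x ranges over the
ambient Euclidean space and u over the auxiliary space R^m (u :: nat => real,
of which only the coordinates 0..m-1 are used).\<close>

definition aff_eval :: "nat \<Rightarrow> ('a::euclidean_space \<times> (nat \<Rightarrow> real) \<times> real) \<Rightarrow> 'a \<Rightarrow> (nat \<Rightarrow> real) \<Rightarrow> real" where
  "aff_eval m l x u = fst l \<bullet> x + (\<Sum>j<m. fst (snd l) j * u j) + snd (snd l)"

text \<open>Second-order cone representability: S is the projection onto x of a set of
pairs (x,u) with u in R^m, cut out by finitely many linear equalities, linear
inequalities, and second-order cone constraints  ||A_k(x,u)+b_k||_2 <= c_k^T(x,u)+d_k,
where the affine map A_k(x,u)+b_k is given by its list of component functionals.\<close>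

definition soc_representable :: "'a::euclidean_space set \<Rightarrow> bool" where
  "soc_representable S \<longleftrightarrow>
    (\<exists>(m::nat) (E :: ('a \<times> (nat \<Rightarrow> real) \<times> real) list)
        (I :: ('a \<times> (nat \<Rightarrow> real) \<times> real) list)
        (C :: (('a \<times> (nat \<Rightarrow> real) \<times> real) list \<times> ('a \<times> (nat \<Rightarrow> real) \<times> real)) list).
      S = {x. \<exists>u. (\<forall>e\<in>set E. aff_eval m e x u = 0)
                 \<and> (\<forall>g\<in>set I. aff_eval m g x u \<le> 0)
                 \<and> (\<forall>(rows, t)\<in>set C.
                       sqrt (\<Sum>r\<leftarrow>rows. (aff_eval m r x u)\<^sup>2) \<le> aff_eval m t x u)})"

end

theory Submission
  imports Defs
begin

text \<open>
  The set S is compact, so by Krein--Milman conv S is the convex hull of its extreme points. At an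
  extreme point at most one index i has a coordinate strictly between its bounds: were there two
  such indices, the constraint would be affine in the two free coordinates, and the point would lie
  inside a segment contained in S. Fixing every coordinate except x_i, y_i at a bound leaves the
  curve x_i y_i = const in a rectangle, which consists of two segments or at most four hyperbola
  arcs. The convex hull of an arc is the region between the arc and its chord, cut out by linear
  constraints and one second-order cone constraint. Thus conv S is the convex hull of finitely many
  compact convex pieces, and Balas' lifting through the perspectives of the pieces represents it
  by second-order cone constraints.
\<close>

section \<open>Pieces of the parameter plane and their perspectives\<close>

datatype piece = Box real real real real | Hyperbolic real real real

text \<open>Hyperbolic k p q is the region between the arc {(z, k/z) | p \<le> z \<le> q} and its chord,
  i.e. the convex hull of the arc.\<close>

fun piece_region :: "piece \<Rightarrow> (real \<times> real) set" where
  "piece_region (Box s1 s2 t1 t2) = {s1..s2} \<times> {t1..t2}"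
| "piece_region (Hyperbolic k p q) =
     {(s, t). p \<le> s \<and> s \<le> q \<and> 0 \<le> t \<and> k \<le> s * t \<and> k * s + p * q * t \<le> k * (p + q)}"

fun wf_piece :: "piece \<Rightarrow> bool" where
  "wf_piece (Box _ _ _ _) \<longleftrightarrow> True"
| "wf_piece (Hyperbolic k p q) \<longleftrightarrow> 0 < k \<and> 0 < p \<and> p \<le> q"

definition tri_eval :: "real \<times> real \<times> real \<Rightarrow> real \<Rightarrow> real \<Rightarrow> real \<Rightarrow> real" where
  "tri_eval c l s t = fst c * l + fst (snd c) * s + snd (snd c) * t"

fun persp_ineqs :: "piece \<Rightarrow> (real \<times> real \<times> real) list" where
  "persp_ineqs (Box s1 s2 t1 t2) = [(s1, -1, 0), (-s2, 1, 0), (t1, 0, -1), (-t2, 0, 1), (-1, 0, 0)]"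
| "persp_ineqs (Hyperbolic k p q) = [(p, -1, 0), (-q, 1, 0), (0, 0, -1), (-(k * (p + q)), k, p * q), (-1, 0, 0)]"

text \<open>The cone constraint is k l^2 \<le> s t in the form \<parallel>(2 \<surd>k l, s - t)\<parallel> \<le> s + t.\<close>

fun persp_cones :: "piece \<Rightarrow> ((real \<times> real \<times> real) list \<times> (real \<times> real \<times> real)) list" where
  "persp_cones (Box _ _ _ _) = []"
| "persp_cones (Hyperbolic k p q) = [([(2 * sqrt k, 0, 0), (0, 1, -1)], (0, 1, 1))]"

text \<open>The closure of the cone {(l, l s, l t) | l > 0, (s, t) in the region}, cut out by
  homogeneous linear and cone constraints.\<close>

definition in_persp :: "piece \<Rightarrow> real \<Rightarrow> real \<Rightarrow> real \<Rightarrow> bool" where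
  "in_persp pc l s t \<longleftrightarrow>
     (\<forall>c\<in>set (persp_ineqs pc). tri_eval c l s t \<le> 0) \<and>
     (\<forall>(rows, r)\<in>set (persp_cones pc). sqrt (\<Sum>row\<leftarrow>rows. (tri_eval row l s t)\<^sup>2) \<le> tri_eval r l s t)"

lemma in_persp_nonneg: "in_persp pc l s t \<Longrightarrow> 0 \<le> l"
  by (cases pc) (auto simp: in_persp_def tri_eval_def)

lemma in_persp_origin: "in_persp pc 0 0 0"
  by (cases pc) (auto simp: in_persp_def tri_eval_def)

lemma in_persp_zero:
  assumes "wf_piece pc" "in_persp pc 0 s t"
  shows "s = 0 \<and> t = 0"
proof (cases pc)
  case (Hyperbolic k p q)
  with assms have "s = 0" "0 \<le> t" "p * q * t \<le> 0" "0 < p * q"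
    by (auto simp: in_persp_def tri_eval_def)
  then show ?thesis
    using mult_le_cancel_left_pos[of "p * q" t 0] by simp
qed (use assms in \<open>auto simp: in_persp_def tri_eval_def\<close>)

lemma soc_hyperbolic_iff:
  fixes l s t k :: real
  assumes "0 < l" "0 < k" "0 \<le> s" "0 \<le> t"
  shows "sqrt ((2 * sqrt k * l)\<^sup>2 + (s - t)\<^sup>2) \<le> s + t \<longleftrightarrow> k \<le> (s / l) * (t / l)"
proof -
  have "sqrt ((2 * sqrt k * l)\<^sup>2 + (s - t)\<^sup>2) \<le> s + t \<longleftrightarrow> 4 * k * l\<^sup>2 + (s - t)\<^sup>2 \<le> (s + t)\<^sup>2"
    using assms by (simp add: real_sqrt_le_iff' power_mult_distrib)
  also have "\<dots> \<longleftrightarrow> k * l\<^sup>2 \<le> s * t"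
    by (simp add: power2_eq_square algebra_simps)
  also have "\<dots> \<longleftrightarrow> k \<le> (s / l) * (t / l)"
    using assms by (simp add: field_simps power2_eq_square)
  finally show ?thesis .
qed

lemma in_persp_iff:
  assumes "0 < l" "wf_piece pc"
  shows "in_persp pc l s t \<longleftrightarrow> (s / l, t / l) \<in> piece_region pc"
proof (cases pc)
  case (Box s1 s2 t1 t2)
  with assms show ?thesis
    by (auto simp: in_persp_def tri_eval_def field_simps)
next
  case (Hyperbolic k p q)
  with assms have k: "0 < k" "0 < p" "p \<le> q"
    by auto
  have lin: "(\<forall>c\<in>set (persp_ineqs pc). tri_eval c l s t \<le> 0) \<longleftrightarrow>
      p \<le> s / l \<and> s / l \<le> q \<and> 0 \<le> t / l \<and> k * (s / l) + p * q * (t / l) \<le> k * (p + q)"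
    using Hyperbolic \<open>0 < l\<close> by (auto simp: tri_eval_def field_simps)
  have "0 \<le> s" "0 \<le> t" if "p \<le> s / l" "0 \<le> t / l"
    using that k \<open>0 < l\<close> by (auto simp: field_simps intro: order.trans[of 0 "l * p"])
  then show ?thesis
    unfolding in_persp_def lin using Hyperbolic soc_hyperbolic_iff[OF \<open>0 < l\<close> k(1)]
    by (auto simp: tri_eval_def)
qed

lemma convex_piece_region:
  assumes "wf_piece pc"
  shows "convex (piece_region pc)"
proof (cases pc)
  case (Box s1 s2 t1 t2)
  then show ?thesis
    by (simp add: convex_Times)
next
  case (Hyperbolic k p q)
  with assms have k: "0 < k" "0 < p"
    by auto
  have "convex_on {p..q} (\<lambda>s. k * inverse s)"
    using k by (intro convex_on_cmul convex_on_inverse) auto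
  then have "convex (epigraph {p..q} (\<lambda>s. k * inverse s) \<inter> {w. (k, p * q) \<bullet> w \<le> k * (p + q)})"
    by (intro convex_Int convex_epigraphI convex_halfspace_le)
  moreover have "piece_region pc = epigraph {p..q} (\<lambda>s. k * inverse s) \<inter> {w. (k, p * q) \<bullet> w \<le> k * (p + q)}"
  proof -
    have "k \<le> s * t \<longleftrightarrow> k * inverse s \<le> t" "0 \<le> t" if "p \<le> s" "k * inverse s \<le> t" for s t
      using that k by (auto simp: field_simps intro: order.trans[OF _ that(2)])
    then show ?thesis
      using Hyperbolic k by (auto simp: epigraph_def field_simps)
  qed
  ultimately show ?thesis
    by simp
qed

section \<open>The convex hull of finitely many placed pieces\<close>

datatype 'a placed = Placed (origin: 'a) (dir1: 'a) (dir2: 'a) (shape: piece)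

definition place :: "'a::real_vector placed \<Rightarrow> real \<times> real \<Rightarrow> 'a" where
  "place P w = origin P + fst w *\<^sub>R dir1 P + snd w *\<^sub>R dir2 P"

definition placed_set :: "'a::real_vector placed \<Rightarrow> 'a set" where
  "placed_set P = place P ` piece_region (shape P)"

lemma place_eq_translation_linear:
  "place P = (\<lambda>x. origin P + x) \<circ> (\<lambda>w. fst w *\<^sub>R dir1 P + snd w *\<^sub>R dir2 P)"
  and linear_place_part: "linear (\<lambda>w. fst w *\<^sub>R dir1 P + snd w *\<^sub>R dir2 P)"
  by (auto simp: place_def algebra_simps intro!: linearI)

lemma place_convex_hull: "place P ` (convex hull A) = convex hull (place P ` A)"
  unfolding place_eq_translation_linear image_comp[symmetric]
  by (simp add: convex_hull_linear_image[OF linear_place_part] convex_hull_translation)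

lemma convex_placed_set: "wf_piece (shape P) \<Longrightarrow> convex (placed_set P)"
  unfolding placed_set_def place_eq_translation_linear image_comp[symmetric]
  by (intro convex_translation convex_linear_image linear_place_part convex_piece_region)

text \<open>Balas' lifted description of the convex hull of a union: weights l_j together with
  perspective coordinates (s_j, t_j) = l_j w_j of one point w_j per piece.\<close>

definition disj_lift :: "'a::real_vector placed list \<Rightarrow> 'a set" where
  "disj_lift ps = {x. \<exists>l s t. (\<forall>j<length ps. in_persp (shape (ps!j)) (l j) (s j) (t j))
      \<and> (\<Sum>j<length ps. l j) = 1
      \<and> x = (\<Sum>j<length ps. l j *\<^sub>R origin (ps!j) + s j *\<^sub>R dir1 (ps!j) + t j *\<^sub>R dir2 (ps!j))}"

lemma in_persp_scaled_place:
  assumes "wf_piece (shape P)" "piece_region (shape P) \<noteq> {}" "in_persp (shape P) l s t"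
  shows "\<exists>w\<in>piece_region (shape P). l *\<^sub>R place P w = l *\<^sub>R origin P + s *\<^sub>R dir1 P + t *\<^sub>R dir2 P"
proof (cases "l = 0")
  case True
  with assms in_persp_zero show ?thesis
    by fastforce
next
  case False
  then have "0 < l"
    using in_persp_nonneg[OF assms(3)] by simp
  then show ?thesis
    using assms in_persp_iff[of l "shape P" s t]
    by (intro bexI[of _ "(s / l, t / l)"]) (auto simp: place_def algebra_simps)
qed

lemma scaled_place_in_persp:
  assumes "wf_piece (shape P)" "w \<in> piece_region (shape P)" "0 \<le> l"
  shows "in_persp (shape P) l (l * fst w) (l * snd w)"
  using assms in_persp_iff[of l "shape P"] in_persp_origin by (cases "l = 0") auto

lemma convex_combination_in_disj_lift:
  assumes "\<forall>P\<in>set ps. wf_piece (shape P)"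
    and c: "\<forall>j<length ps. 0 \<le> c j" "(\<Sum>j<length ps. c j) = 1"
    and p: "\<forall>j<length ps. p j \<in> placed_set (ps!j)"
  shows "(\<Sum>j<length ps. c j *\<^sub>R p j) \<in> disj_lift ps"
proof -
  have "\<forall>j<length ps. \<exists>w\<in>piece_region (shape (ps!j)). p j = place (ps!j) w"
    using p unfolding placed_set_def by blast
  then obtain w where w: "\<And>j. j < length ps \<Longrightarrow> w j \<in> piece_region (shape (ps!j)) \<and> p j = place (ps!j) (w j)"
    by metis
  show ?thesis
    unfolding disj_lift_def
  proof (intro CollectI exI conjI allI impI)
    show "in_persp (shape (ps!j)) (c j) (c j * fst (w j)) (c j * snd (w j))" if "j < length ps" for j
      using that assms w by (intro scaled_place_in_persp) auto
    show "(\<Sum>j<length ps. c j *\<^sub>R p j) = (\<Sum>j<length ps. c j *\<^sub>R origin (ps!j)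
        + (c j * fst (w j)) *\<^sub>R dir1 (ps!j) + (c j * snd (w j)) *\<^sub>R dir2 (ps!j))"
      by (intro sum.cong) (auto simp: w place_def algebra_simps)
  qed (use c in simp)
qed

lemma disj_lift_convex_combination:
  assumes "\<forall>P\<in>set ps. wf_piece (shape P) \<and> piece_region (shape P) \<noteq> {}" "x \<in> disj_lift ps"
  obtains c p where "\<forall>j<length ps. 0 \<le> c j" "(\<Sum>j<length ps. c j) = 1"
    "\<forall>j<length ps. p j \<in> placed_set (ps!j)" "x = (\<Sum>j<length ps. c j *\<^sub>R p j)"
proof -
  obtain l s t where h: "\<forall>j<length ps. in_persp (shape (ps!j)) (l j) (s j) (t j)" "(\<Sum>j<length ps. l j) = 1"
    and x: "x = (\<Sum>j<length ps. l j *\<^sub>R origin (ps!j) + s j *\<^sub>R dir1 (ps!j) + t j *\<^sub>R dir2 (ps!j))"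
    using assms(2) unfolding disj_lift_def by blast
  have "\<forall>j<length ps. \<exists>w\<in>piece_region (shape (ps!j)).
      l j *\<^sub>R place (ps!j) w = l j *\<^sub>R origin (ps!j) + s j *\<^sub>R dir1 (ps!j) + t j *\<^sub>R dir2 (ps!j)"
    using h(1) assms(1) nth_mem by (blast intro: in_persp_scaled_place)
  then obtain w where w: "\<And>j. j < length ps \<Longrightarrow> w j \<in> piece_region (shape (ps!j))
      \<and> l j *\<^sub>R place (ps!j) (w j) = l j *\<^sub>R origin (ps!j) + s j *\<^sub>R dir1 (ps!j) + t j *\<^sub>R dir2 (ps!j)"
    by metis
  show ?thesis
  proof (rule that)
    show "\<forall>j<length ps. 0 \<le> l j"
      using h(1) in_persp_nonneg by blast
    show "\<forall>j<length ps. place (ps!j) (w j) \<in> placed_set (ps!j)"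
      using w by (simp add: placed_set_def)
    show "x = (\<Sum>j<length ps. l j *\<^sub>R place (ps!j) (w j))"
      unfolding x using w by (intro sum.cong) auto
  qed (use h(2) in simp)
qed

lemma disj_lift_eq_convex_hull:
  assumes "\<forall>P\<in>set ps. wf_piece (shape P) \<and> piece_region (shape P) \<noteq> {}"
  shows "disj_lift ps = convex hull (\<Union>P\<in>set ps. placed_set P)"
proof -
  have wf: "wf_piece (shape (ps!j)) \<and> piece_region (shape (ps!j)) \<noteq> {}" if "j < length ps" for j
    using assms that by simp
  have "(\<Union>P\<in>set ps. placed_set P) = (\<Union>j\<in>{..<length ps}. placed_set (ps!j))"
    by (auto simp: in_set_conv_nth) (use nth_mem in blast)
  also have "convex hull \<dots> = {\<Sum>j\<in>{..<length ps}. c j *\<^sub>R p j | c p.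
      (\<forall>j\<in>{..<length ps}. 0 \<le> c j) \<and> sum c {..<length ps} = 1 \<and> (\<forall>j\<in>{..<length ps}. p j \<in> placed_set (ps!j))}"
    using wf convex_placed_set by (intro convex_hull_finite_union) (auto simp: placed_set_def)
  also have "\<dots> = disj_lift ps" (is "?H = _")
  proof (intro set_eqI iffI)
    show "x \<in> disj_lift ps" if "x \<in> ?H" for x
      using that assms convex_combination_in_disj_lift[of ps] by auto
    show "x \<in> ?H" if x: "x \<in> disj_lift ps" for x
    proof -
      obtain c p where "\<forall>j<length ps. 0 \<le> c j" "(\<Sum>j<length ps. c j) = 1"
        "\<forall>j<length ps. p j \<in> placed_set (ps!j)" "x = (\<Sum>j<length ps. c j *\<^sub>R p j)"
        using disj_lift_convex_combination[OF assms x] .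
      then show ?thesis
        by auto
    qed
  qed
  finally show ?thesis ..
qed

lemma sum_lessThan_triple:
  fixes P :: nat
  shows "(\<Sum>i<3 * P. f i) = (\<Sum>j<P. f (3 * j) + f (3 * j + 1) + f (3 * j + 2))"
proof (induction P)
  case (Suc P)
  have "{..<3 * Suc P} = {..<Suc (Suc (Suc (3 * P)))}"
    by simp
  then show ?case
    by (simp only: sum.lessThan_Suc Suc.IH) (simp add: algebra_simps)
qed simp

lemma triple_index_simps [simp]:
  fixes j :: nat
  shows "3 * j mod 3 = 0" "Suc (3 * j) mod 3 = 1" "Suc (Suc (3 * j)) mod 3 = 2"
    and "3 * j div 3 = j" "Suc (3 * j) div 3 = j" "Suc (Suc (3 * j)) div 3 = j"
  by presburger+

lemma ex_interleave3:
  "(\<exists>l s t. Q l s t) \<longleftrightarrow> (\<exists>u :: nat \<Rightarrow> 'a. Q (\<lambda>j. u (3 * j)) (\<lambda>j. u (3 * j + 1)) (\<lambda>j. u (3 * j + 2)))"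
proof
  assume "\<exists>l s t. Q l s t"
  then obtain l s t where "Q l s t"
    by blast
  moreover define u where "u i = [l (i div 3), s (i div 3), t (i div 3)] ! (i mod 3)" for i
  ultimately show "\<exists>u. Q (\<lambda>j. u (3 * j)) (\<lambda>j. u (3 * j + 1)) (\<lambda>j. u (3 * j + 2))"
    by (intro exI[of _ u]) (simp add: u_def)
qed blast

definition block_coeffs :: "nat \<Rightarrow> real \<times> real \<times> real \<Rightarrow> nat \<Rightarrow> real" where
  "block_coeffs j c i =
     (if i = 3 * j then fst c else if i = 3 * j + 1 then fst (snd c) else if i = 3 * j + 2 then snd (snd c) else 0)"

lemma aff_eval_block:
  assumes "j < P"
  shows "aff_eval (3 * P) (0, block_coeffs j c, 0) x u = tri_eval c (u (3 * j)) (u (3 * j + 1)) (u (3 * j + 2))"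
proof -
  have "(\<Sum>i<3 * P. block_coeffs j c i * u i) = (\<Sum>i<3 * P. (if i = 3 * j then fst c * u i else 0)
     + (if i = 3 * j + 1 then fst (snd c) * u i else 0) + (if i = 3 * j + 2 then snd (snd c) * u i else 0))"
    by (rule sum.cong) (auto simp: block_coeffs_def)
  also have "\<dots> = tri_eval c (u (3 * j)) (u (3 * j + 1)) (u (3 * j + 2))"
    using assms by (simp add: sum.distrib tri_eval_def)
  finally show ?thesis
    by (simp add: aff_eval_def)
qed

definition lift_generator :: "'a placed list \<Rightarrow> nat \<Rightarrow> 'a" where
  "lift_generator ps i = [origin (ps!(i div 3)), dir1 (ps!(i div 3)), dir2 (ps!(i div 3))] ! (i mod 3)"

lemma sum_lift_generator:
  "(\<Sum>i<3 * length ps. u i *\<^sub>R lift_generator ps i)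
     = (\<Sum>j<length ps. u (3 * j) *\<^sub>R origin (ps!j) + u (3 * j + 1) *\<^sub>R dir1 (ps!j) + u (3 * j + 2) *\<^sub>R dir2 (ps!j))"
  by (simp add: sum_lessThan_triple lift_generator_def)

lemma aff_eval_lift_coordinate:
  fixes ps :: "'a::euclidean_space placed list"
  shows "aff_eval (3 * length ps) (b, \<lambda>i. - (lift_generator ps i \<bullet> b), 0) x u
    = x \<bullet> b - (\<Sum>j<length ps. u (3 * j) *\<^sub>R origin (ps!j) + u (3 * j + 1) *\<^sub>R dir1 (ps!j)
                               + u (3 * j + 2) *\<^sub>R dir2 (ps!j)) \<bullet> b"
  unfolding sum_lift_generator[symmetric]
  by (simp add: aff_eval_def inner_sum_right sum_negf inner_commute mult.commute)

lemma sum_list_aff_eval_block: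
  assumes "j < P"
  shows "sum_list (map ((\<lambda>row. (aff_eval (3 * P) row x u)\<^sup>2) \<circ> (\<lambda>c. (0, block_coeffs j c, 0))) cs)
    = (\<Sum>row\<leftarrow>cs. (tri_eval row (u (3 * j)) (u (3 * j + 1)) (u (3 * j + 2)))\<^sup>2)"
  using assms by (induction cs) (simp_all add: aff_eval_block)

lemma soc_representable_disj_lift:
  fixes ps :: "'a::euclidean_space placed list"
  shows "soc_representable (disj_lift ps)"
proof -
  \<comment> \<open>u (3 j), u (3 j + 1), u (3 j + 2) play the roles of l_j, s_j, t_j\<close>
  define P where "P = length ps"
  obtain bl where bl: "set bl = (Basis :: 'a set)"
    using finite_list[OF finite_Basis] by blast
  define E :: "('a \<times> (nat \<Rightarrow> real) \<times> real) list" where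
    "E = (0, \<lambda>i. if i mod 3 = 0 then 1 else 0, -1) # map (\<lambda>b. (b, \<lambda>i. - (lift_generator ps i \<bullet> b), 0)) bl"
  define I :: "('a \<times> (nat \<Rightarrow> real) \<times> real) list" where
    "I = concat (map (\<lambda>j. map (\<lambda>c. (0, block_coeffs j c, 0)) (persp_ineqs (shape (ps!j)))) [0..<P])"
  define C :: "(('a \<times> (nat \<Rightarrow> real) \<times> real) list \<times> ('a \<times> (nat \<Rightarrow> real) \<times> real)) list" where
    "C = concat (map (\<lambda>j. map (\<lambda>(rows, r). (map (\<lambda>c. (0, block_coeffs j c, 0)) rows, (0, block_coeffs j r, 0)))
                         (persp_cones (shape (ps!j)))) [0..<P])"
  define Q where "Q x l s t \<longleftrightarrow> (\<forall>j<P. in_persp (shape (ps!j)) (l j) (s j) (t j)) \<and> (\<Sum>j<P. l j) = 1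
      \<and> x = (\<Sum>j<P. l j *\<^sub>R origin (ps!j) + s j *\<^sub>R dir1 (ps!j) + t j *\<^sub>R dir2 (ps!j))" for x l s t
  have E_iff: "(\<forall>e\<in>set E. aff_eval (3 * P) e x u = 0) \<longleftrightarrow> (\<Sum>j<P. u (3 * j)) = 1
      \<and> x = (\<Sum>j<P. u (3 * j) *\<^sub>R origin (ps!j) + u (3 * j + 1) *\<^sub>R dir1 (ps!j) + u (3 * j + 2) *\<^sub>R dir2 (ps!j))"
    for x u
  proof -
    have "aff_eval (3 * P) (0, \<lambda>i. if i mod 3 = 0 then 1 else 0, -1) x u = (\<Sum>j<P. u (3 * j)) - 1"
      by (simp add: aff_eval_def sum_lessThan_triple)
    then show ?thesis
      unfolding E_def P_def using bl by (auto simp: euclidean_eq_iff[where 'a='a] aff_eval_lift_coordinate)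
  qed
  have I_iff: "(\<forall>g\<in>set I. aff_eval (3 * P) g x u \<le> 0) \<longleftrightarrow>
      (\<forall>j<P. \<forall>c\<in>set (persp_ineqs (shape (ps!j))). tri_eval c (u (3 * j)) (u (3 * j + 1)) (u (3 * j + 2)) \<le> 0)"
    for x u
    unfolding I_def by (auto simp: aff_eval_block)
  have C_iff: "(\<forall>(rows, r)\<in>set C. sqrt (\<Sum>row\<leftarrow>rows. (aff_eval (3 * P) row x u)\<^sup>2) \<le> aff_eval (3 * P) r x u)
      \<longleftrightarrow> (\<forall>j<P. \<forall>(rows, r)\<in>set (persp_cones (shape (ps!j))).
            sqrt (\<Sum>row\<leftarrow>rows. (tri_eval row (u (3 * j)) (u (3 * j + 1)) (u (3 * j + 2)))\<^sup>2)
              \<le> tri_eval r (u (3 * j)) (u (3 * j + 1)) (u (3 * j + 2)))"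
    for x u
    unfolding C_def by (auto simp: split_beta sum_list_aff_eval_block aff_eval_block)
  have "disj_lift ps = {x. \<exists>l s t. Q x l s t}"
    unfolding disj_lift_def Q_def P_def ..
  also have "\<dots> = {x. \<exists>u. Q x (\<lambda>j. u (3 * j)) (\<lambda>j. u (3 * j + 1)) (\<lambda>j. u (3 * j + 2))}"
    by (simp only: ex_interleave3)
  also have "\<dots> = {x. \<exists>u. (\<forall>e\<in>set E. aff_eval (3 * P) e x u = 0) \<and> (\<forall>g\<in>set I. aff_eval (3 * P) g x u \<le> 0)
      \<and> (\<forall>(rows, r)\<in>set C. sqrt (\<Sum>row\<leftarrow>rows. (aff_eval (3 * P) row x u)\<^sup>2) \<le> aff_eval (3 * P) r x u)}"
    unfolding E_iff I_iff C_iff Q_def in_persp_def by blast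
  finally show ?thesis
    unfolding soc_representable_def by blast
qed

corollary soc_representable_convex_hull_placed:
  fixes \<P> :: "'a::euclidean_space placed set"
  assumes "finite \<P>" "\<forall>P\<in>\<P>. wf_piece (shape P) \<and> piece_region (shape P) \<noteq> {}"
  shows "soc_representable (convex hull (\<Union>P\<in>\<P>. placed_set P))"
proof -
  obtain ps where "set ps = \<P>"
    using finite_list[OF assms(1)] by blast
  with soc_representable_disj_lift disj_lift_eq_convex_hull assms(2) show ?thesis
    by metis
qed

section \<open>Hyperbola arcs in a rectangle\<close>

lemma convex_vertical_between:
  fixes C :: "(real \<times> real) set"
  assumes "convex C" "(s, t0) \<in> C" "(s, t1) \<in> C" "t0 \<le> t" "t \<le> t1"
  shows "(s, t) \<in> C"
proof -
  have "t \<in> closed_segment t0 t1"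
    using assms by (simp add: closed_segment_eq_real_ivl)
  then obtain u where "0 \<le> u" "u \<le> 1" "t = (1 - u) * t0 + u * t1"
    by (auto simp: in_segment)
  then have "(s, t) = (1 - u) *\<^sub>R (s, t0) + u *\<^sub>R (s, t1)"
    by (simp add: algebra_simps)
  then show ?thesis
    using convexD[OF assms(1-3), of "1 - u" u] \<open>0 \<le> u\<close> \<open>u \<le> 1\<close> by simp
qed

lemma hyperbolic_region_subset_hull:
  assumes "0 < k" "0 < p" "p \<le> q"
  shows "piece_region (Hyperbolic k p q) \<subseteq> convex hull {(z, k / z) | z. p \<le> z \<and> z \<le> q}"
    (is "_ \<subseteq> convex hull ?H")
proof safe
  fix s t
  assume "(s, t) \<in> piece_region (Hyperbolic k p q)"
  then have st: "p \<le> s" "s \<le> q" "k \<le> s * t" "k * s + p * q * t \<le> k * (p + q)"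
    by auto
  have arc: "(z, k / z) \<in> convex hull ?H" if "p \<le> z" "z \<le> q" for z
    using that by (intro hull_inc) blast
  have "s \<in> closed_segment p q"
    using st by (simp add: closed_segment_eq_real_ivl)
  then obtain u where u: "0 \<le> u" "u \<le> 1" "s = (1 - u) * p + u * q"
    by (auto simp: in_segment)
  define tc where "tc = (1 - u) * (k / p) + u * (k / q)"
  \<comment> \<open>the point above s on the chord through the end points of the arc\<close>
  have "(1 - u) *\<^sub>R (p, k / p) + u *\<^sub>R (q, k / q) \<in> convex hull ?H"
    using u assms by (intro convexD arc convex_convex_hull) auto
  then have chord: "(s, tc) \<in> convex hull ?H"
    by (simp add: u(3) tc_def)
  have "p * q * t \<le> k * (u * p + (1 - u) * q)"
    using st(4) u(3) by (simp add: algebra_simps)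
  then have "t \<le> tc"
    using assms by (simp add: tc_def field_simps)
  moreover have "k / s \<le> t"
    using st assms by (simp add: field_simps)
  ultimately show "(s, t) \<in> convex hull ?H"
    using convex_vertical_between[OF convex_convex_hull arc[OF st(1,2)] chord] by simp
qed

text \<open>The branch z w = k, z > 0, meets the rectangle [l1, h1] \<times> [l2, h2] in the arc p \<le> z \<le> q.\<close>

definition hyperbola_pieces :: "'a \<Rightarrow> 'a \<Rightarrow> 'a \<Rightarrow> real \<Rightarrow> real \<Rightarrow> real \<Rightarrow> real \<Rightarrow> real \<Rightarrow> 'a placed list" where
  "hyperbola_pieces v e e' k l1 h1 l2 h2 =
     (let p = max l1 (k / h2); q = if 0 < l2 then min h1 (k / l2) else h1 in
      if 0 < k \<and> 0 < h2 \<and> p \<le> q then [Placed v e e' (Hyperbolic k p q)] else [])"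

lemma wf_hyperbola_pieces:
  "P \<in> set (hyperbola_pieces v e e' k l1 h1 l2 h2) \<Longrightarrow> wf_piece (shape P)"
  by (auto simp: hyperbola_pieces_def Let_def less_max_iff_disj split: if_splits)

lemma hyperbola_pieces_subset:
  fixes K :: "'a::real_vector set"
  assumes P: "P \<in> set (hyperbola_pieces v e e' k l1 h1 l2 h2)" and "convex K"
    and arc: "\<And>z w. l1 \<le> z \<Longrightarrow> z \<le> h1 \<Longrightarrow> l2 \<le> w \<Longrightarrow> w \<le> h2 \<Longrightarrow> z * w = k \<Longrightarrow> v + z *\<^sub>R e + w *\<^sub>R e' \<in> K"
  shows "placed_set P \<subseteq> K"
proof -
  define p where "p = max l1 (k / h2)"
  define q where "q = (if 0 < l2 then min h1 (k / l2) else h1)"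
  have P_eq: "P = Placed v e e' (Hyperbolic k p q)" and k: "0 < k" "0 < h2" "p \<le> q"
    using P by (auto simp: hyperbola_pieces_def Let_def p_def q_def split: if_splits)
  have "0 < p"
    using k by (simp add: p_def less_max_iff_disj)
  have "place P (z, k / z) \<in> K" if "p \<le> z" "z \<le> q" for z
  proof -
    have "0 < z" "l1 \<le> z" "z \<le> h1" "k / h2 \<le> z"
      using that \<open>0 < p\<close> by (auto simp: p_def q_def split: if_splits)
    moreover have "l2 \<le> k / z"
    proof (cases "0 < l2")
      case True
      then show ?thesis
        using that \<open>0 < z\<close> by (simp add: q_def field_simps)
    next
      case False
      then show ?thesis
        using \<open>0 < z\<close> k divide_pos_pos[of k z] by linarith
    qed
    ultimately show ?thesis
      using arc[of z "k / z"] k by (simp add: P_eq place_def field_simps)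
  qed
  then have "place P ` {(z, k / z) | z. p \<le> z \<and> z \<le> q} \<subseteq> K"
    by blast
  then have "convex hull (place P ` {(z, k / z) | z. p \<le> z \<and> z \<le> q}) \<subseteq> K"
    using \<open>convex K\<close> by (rule hull_minimal)
  moreover have "placed_set P \<subseteq> place P ` (convex hull {(z, k / z) | z. p \<le> z \<and> z \<le> q})"
    using hyperbolic_region_subset_hull[OF k(1) \<open>0 < p\<close> k(3)] by (auto simp: placed_set_def P_eq)
  ultimately show ?thesis
    by (simp add: place_convex_hull)
qed

lemma hyperbola_pieces_cover:
  fixes z w :: real
  assumes "0 < k" "l1 \<le> z" "z \<le> h1" "l2 \<le> w" "w \<le> h2" "z * w = k" "0 < z"
  shows "\<exists>P\<in>set (hyperbola_pieces v e e' k l1 h1 l2 h2). v + z *\<^sub>R e + w *\<^sub>R e' \<in> placed_set P"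
proof -
  define p where "p = max l1 (k / h2)"
  define q where "q = (if 0 < l2 then min h1 (k / l2) else h1)"
  have "0 < w"
    using assms by (metis zero_less_mult_pos)
  have "p \<le> z"
    using assms \<open>0 < w\<close> by (auto simp: p_def field_simps intro: order.trans[of _ "z * w"])
  moreover have "z \<le> q"
    using assms \<open>0 < w\<close> by (auto simp: q_def field_simps intro: order.trans[of _ "z * w"])
  moreover have "k * z + p * q * w \<le> k * (p + q)"
  proof -
    have "w * (z * z + p * q) \<le> w * ((p + q) * z)"
      using \<open>p \<le> z\<close> \<open>z \<le> q\<close> \<open>0 < w\<close> mult_nonneg_nonpos[of "z - p" "z - q"]
      by (intro mult_left_mono) (auto simp: algebra_simps)
    moreover have "k * z + p * q * w = w * (z * z + p * q)" "k * (p + q) = w * ((p + q) * z)"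
      by (simp_all add: algebra_simps flip: assms(6))
    ultimately show ?thesis
      by linarith
  qed
  ultimately have "(z, w) \<in> piece_region (Hyperbolic k p q)"
    using assms \<open>0 < w\<close> by simp
  moreover have "0 < h2"
    using \<open>0 < w\<close> assms by simp
  moreover have "v + z *\<^sub>R e + w *\<^sub>R e' = place (Placed v e e' (Hyperbolic k p q)) (z, w)"
    by (simp add: place_def)
  ultimately show ?thesis
    using \<open>p \<le> z\<close> \<open>z \<le> q\<close> assms(1)
    by (auto simp: hyperbola_pieces_def Let_def p_def[symmetric] q_def[symmetric] placed_set_def)
qed

text \<open>The sign pattern (\<sigma>, \<tau>) reflects one quadrant onto the positive one.\<close>

definition quadrant_pieces :: "'a::real_vector \<Rightarrow> 'a \<Rightarrow> 'a \<Rightarrow> real \<Rightarrow> real \<Rightarrow> real \<Rightarrow> real \<Rightarrow> real \<Rightarrow> 'a placed list" where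
  "quadrant_pieces v e e' k l1 h1 l2 h2 =
     concat [hyperbola_pieces v (\<sigma> *\<^sub>R e) (\<tau> *\<^sub>R e') (\<sigma> * \<tau> * k)
               (min (\<sigma> * l1) (\<sigma> * h1)) (max (\<sigma> * l1) (\<sigma> * h1)) (min (\<tau> * l2) (\<tau> * h2)) (max (\<tau> * l2) (\<tau> * h2)).
             \<sigma> \<leftarrow> [1, -1], \<tau> \<leftarrow> [1, -1]]"

lemma sign_flip_interval_iff:
  fixes \<sigma> :: real
  assumes "\<sigma> \<in> {-1, 1}" "l \<le> h"
  shows "min (\<sigma> * l) (\<sigma> * h) \<le> z \<and> z \<le> max (\<sigma> * l) (\<sigma> * h) \<longleftrightarrow> l \<le> \<sigma> * z \<and> \<sigma> * z \<le> h"
  using assms by auto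

lemma mem_quadrant_pieces:
  "P \<in> set (quadrant_pieces v e e' k l1 h1 l2 h2) \<longleftrightarrow> (\<exists>\<sigma>\<in>{-1, 1}. \<exists>\<tau>\<in>{-1, 1}.
     P \<in> set (hyperbola_pieces v (\<sigma> *\<^sub>R e) (\<tau> *\<^sub>R e') (\<sigma> * \<tau> * k)
       (min (\<sigma> * l1) (\<sigma> * h1)) (max (\<sigma> * l1) (\<sigma> * h1)) (min (\<tau> * l2) (\<tau> * h2)) (max (\<tau> * l2) (\<tau> * h2))))"
  by (auto simp: quadrant_pieces_def)

lemma wf_quadrant_pieces:
  "P \<in> set (quadrant_pieces v e e' k l1 h1 l2 h2) \<Longrightarrow> wf_piece (shape P)"
  by (auto simp: quadrant_pieces_def dest: wf_hyperbola_pieces)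

lemma quadrant_pieces_subset:
  fixes K :: "'a::real_vector set"
  assumes P: "P \<in> set (quadrant_pieces v e e' k l1 h1 l2 h2)" and "convex K" "l1 \<le> h1" "l2 \<le> h2"
    and curve: "\<And>z w. l1 \<le> z \<Longrightarrow> z \<le> h1 \<Longrightarrow> l2 \<le> w \<Longrightarrow> w \<le> h2 \<Longrightarrow> z * w = k \<Longrightarrow> v + z *\<^sub>R e + w *\<^sub>R e' \<in> K"
  shows "placed_set P \<subseteq> K"
proof -
  obtain \<sigma> \<tau> :: real where sign: "\<sigma> \<in> {-1, 1}" "\<tau> \<in> {-1, 1}"
    and P: "P \<in> set (hyperbola_pieces v (\<sigma> *\<^sub>R e) (\<tau> *\<^sub>R e') (\<sigma> * \<tau> * k)
               (min (\<sigma> * l1) (\<sigma> * h1)) (max (\<sigma> * l1) (\<sigma> * h1)) (min (\<tau> * l2) (\<tau> * h2)) (max (\<tau> * l2) (\<tau> * h2)))"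
    using P unfolding mem_quadrant_pieces by blast
  show ?thesis
    using P \<open>convex K\<close>
  proof (rule hyperbola_pieces_subset)
    fix z w
    assume "min (\<sigma> * l1) (\<sigma> * h1) \<le> z" "z \<le> max (\<sigma> * l1) (\<sigma> * h1)"
      "min (\<tau> * l2) (\<tau> * h2) \<le> w" "w \<le> max (\<tau> * l2) (\<tau> * h2)" "z * w = \<sigma> * \<tau> * k"
    moreover have "\<sigma> * \<sigma> = 1" "\<tau> * \<tau> = 1"
      using sign by auto
    ultimately have "(\<sigma> * z) * (\<tau> * w) = k"
      by (metis mult.assoc mult.commute mult.left_commute mult_1)
    moreover have "l1 \<le> \<sigma> * z" "\<sigma> * z \<le> h1" "l2 \<le> \<tau> * w" "\<tau> * w \<le> h2"
      using sign_flip_interval_iff[OF sign(1) \<open>l1 \<le> h1\<close>] sign_flip_interval_iff[OF sign(2) \<open>l2 \<le> h2\<close>]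
        \<open>min (\<sigma> * l1) (\<sigma> * h1) \<le> z\<close> \<open>z \<le> max (\<sigma> * l1) (\<sigma> * h1)\<close>
        \<open>min (\<tau> * l2) (\<tau> * h2) \<le> w\<close> \<open>w \<le> max (\<tau> * l2) (\<tau> * h2)\<close>
      by blast+
    ultimately show "v + z *\<^sub>R \<sigma> *\<^sub>R e + w *\<^sub>R \<tau> *\<^sub>R e' \<in> K"
      using curve[of "\<sigma> * z" "\<tau> * w"] by (simp add: mult.commute)
  qed
qed

lemma quadrant_pieces_cover:
  fixes z w :: real
  assumes "k \<noteq> 0" "l1 \<le> z" "z \<le> h1" "l2 \<le> w" "w \<le> h2" "z * w = k"
  shows "\<exists>P\<in>set (quadrant_pieces v e e' k l1 h1 l2 h2). v + z *\<^sub>R e + w *\<^sub>R e' \<in> placed_set P"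
proof -
  define \<sigma> \<tau> where "\<sigma> = sgn z" and "\<tau> = sgn w"
  have "z \<noteq> 0" "w \<noteq> 0"
    using assms by auto
  then have sign: "\<sigma> \<in> {-1, 1}" "\<tau> \<in> {-1, 1}"
    by (auto simp: \<sigma>_def \<tau>_def sgn_real_def)
  have flip: "\<sigma> * \<bar>z\<bar> = z" "\<tau> * \<bar>w\<bar> = w"
    by (simp_all add: \<sigma>_def \<tau>_def sgn_mult_abs)
  have "l1 \<le> h1" "l2 \<le> h2"
    using assms by linarith+
  then have "min (\<sigma> * l1) (\<sigma> * h1) \<le> \<bar>z\<bar> \<and> \<bar>z\<bar> \<le> max (\<sigma> * l1) (\<sigma> * h1)"
    "min (\<tau> * l2) (\<tau> * h2) \<le> \<bar>w\<bar> \<and> \<bar>w\<bar> \<le> max (\<tau> * l2) (\<tau> * h2)"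
    using sign_flip_interval_iff[OF sign(1) \<open>l1 \<le> h1\<close>, of "\<bar>z\<bar>"]
      sign_flip_interval_iff[OF sign(2) \<open>l2 \<le> h2\<close>, of "\<bar>w\<bar>"] flip assms(2-5) by simp_all
  then have box: "min (\<sigma> * l1) (\<sigma> * h1) \<le> \<bar>z\<bar>" "\<bar>z\<bar> \<le> max (\<sigma> * l1) (\<sigma> * h1)"
    "min (\<tau> * l2) (\<tau> * h2) \<le> \<bar>w\<bar>" "\<bar>w\<bar> \<le> max (\<tau> * l2) (\<tau> * h2)"
    by simp_all
  have prod: "\<bar>z\<bar> * \<bar>w\<bar> = \<sigma> * \<tau> * k"
    by (simp add: \<sigma>_def \<tau>_def abs_sgn algebra_simps flip: assms(6))
  have "0 < \<bar>z\<bar>" "0 < \<sigma> * \<tau> * k"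
    using \<open>z \<noteq> 0\<close> \<open>w \<noteq> 0\<close> by (simp_all flip: prod)
  from hyperbola_pieces_cover[OF this(2) box prod this(1), of v "\<sigma> *\<^sub>R e" "\<tau> *\<^sub>R e'"]
  obtain P where P: "P \<in> set (hyperbola_pieces v (\<sigma> *\<^sub>R e) (\<tau> *\<^sub>R e') (\<sigma> * \<tau> * k)
      (min (\<sigma> * l1) (\<sigma> * h1)) (max (\<sigma> * l1) (\<sigma> * h1)) (min (\<tau> * l2) (\<tau> * h2)) (max (\<tau> * l2) (\<tau> * h2)))"
    and "v + \<bar>z\<bar> *\<^sub>R \<sigma> *\<^sub>R e + \<bar>w\<bar> *\<^sub>R \<tau> *\<^sub>R e' \<in> placed_set P"
    by blast
  moreover have "P \<in> set (quadrant_pieces v e e' k l1 h1 l2 h2)"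
    unfolding mem_quadrant_pieces using sign P by blast
  moreover have "v + \<bar>z\<bar> *\<^sub>R \<sigma> *\<^sub>R e + \<bar>w\<bar> *\<^sub>R \<tau> *\<^sub>R e' = v + z *\<^sub>R e + w *\<^sub>R e'"
    using flip by (simp add: mult.commute)
  ultimately show ?thesis
    by metis
qed


definition rect_hyperbola_pieces :: "'a::real_vector \<Rightarrow> 'a \<Rightarrow> 'a \<Rightarrow> real \<Rightarrow> real \<Rightarrow> real \<Rightarrow> real \<Rightarrow> real \<Rightarrow> 'a placed list" where
  "rect_hyperbola_pieces v e e' k l1 h1 l2 h2 =
     (if k = 0 then [Placed v e e' (Box (max l1 0) (min h1 0) l2 h2), Placed v e e' (Box l1 h1 (max l2 0) (min h2 0))]
      else quadrant_pieces v e e' k l1 h1 l2 h2)"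

lemma wf_rect_hyperbola_pieces:
  "P \<in> set (rect_hyperbola_pieces v e e' k l1 h1 l2 h2) \<Longrightarrow> wf_piece (shape P)"
  by (auto simp: rect_hyperbola_pieces_def split: if_splits dest: wf_quadrant_pieces)

lemma rect_hyperbola_pieces_subset:
  fixes K :: "'a::real_vector set"
  assumes P: "P \<in> set (rect_hyperbola_pieces v e e' k l1 h1 l2 h2)" and "convex K" "l1 \<le> h1" "l2 \<le> h2"
    and curve: "\<And>z w. l1 \<le> z \<Longrightarrow> z \<le> h1 \<Longrightarrow> l2 \<le> w \<Longrightarrow> w \<le> h2 \<Longrightarrow> z * w = k \<Longrightarrow> v + z *\<^sub>R e + w *\<^sub>R e' \<in> K"
  shows "placed_set P \<subseteq> K"
proof (cases "k = 0")
  case True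
  show ?thesis
  proof
    fix x
    assume "x \<in> placed_set P"
    then obtain z w where "(z, w) \<in> piece_region (shape P)" "x = place P (z, w)"
      unfolding placed_set_def by auto
    with P True have "x = v + z *\<^sub>R e + w *\<^sub>R e'" "l1 \<le> z" "z \<le> h1" "l2 \<le> w" "w \<le> h2" "z * w = k"
      by (auto simp: rect_hyperbola_pieces_def place_def)
    with curve show "x \<in> K"
      by simp
  qed
next
  case False
  with P have "P \<in> set (quadrant_pieces v e e' k l1 h1 l2 h2)"
    by (simp add: rect_hyperbola_pieces_def)
  then show ?thesis
    using assms(2-4) curve by (rule quadrant_pieces_subset)
qed

lemma rect_hyperbola_pieces_cover:
  fixes z w :: real
  assumes "l1 \<le> z" "z \<le> h1" "l2 \<le> w" "w \<le> h2" "z * w = k"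
  shows "\<exists>P\<in>set (rect_hyperbola_pieces v e e' k l1 h1 l2 h2). v + z *\<^sub>R e + w *\<^sub>R e' \<in> placed_set P"
proof (cases "k = 0")
  case True
  with assms(5) have "z = 0 \<or> w = 0"
    by simp
  then obtain B where B: "B \<in> {Box (max l1 0) (min h1 0) l2 h2, Box l1 h1 (max l2 0) (min h2 0)}"
    and "(z, w) \<in> piece_region B"
  proof
    assume "z = 0"
    with assms(1-4) show ?thesis
      by (intro that[of "Box (max l1 0) (min h1 0) l2 h2"]) auto
  next
    assume "w = 0"
    with assms(1-4) show ?thesis
      by (intro that[of "Box l1 h1 (max l2 0) (min h2 0)"]) auto
  qed
  moreover have "v + z *\<^sub>R e + w *\<^sub>R e' = place (Placed v e e' B) (z, w)"
    by (simp add: place_def)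
  ultimately show ?thesis
    using True unfolding rect_hyperbola_pieces_def placed_set_def
    by (intro bexI[of _ "Placed v e e' B"]) (auto intro: rev_image_eqI)
next
  case False
  with quadrant_pieces_cover[OF False assms] show ?thesis
    by (simp add: rect_hyperbola_pieces_def)
qed

section \<open>Extreme points of the bilinear set\<close>

lemma convex_hull_eq_convex_hull_Union:
  fixes K :: "'a::euclidean_space set"
  assumes "compact K" "\<And>T. T \<in> \<T> \<Longrightarrow> T \<subseteq> convex hull K"
    and "{x. x extreme_point_of convex hull K} \<subseteq> \<Union>\<T>"
  shows "convex hull K = convex hull (\<Union>\<T>)"
proof (rule antisym)
  have "convex hull K = convex hull {x. x extreme_point_of convex hull K}"
    using assms(1) by (intro Krein_Milman_Minkowski compact_convex_hull convex_convex_hull)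
  also have "\<dots> \<subseteq> convex hull (\<Union>\<T>)"
    using assms(3) by (rule hull_mono)
  finally show "convex hull K \<subseteq> convex hull (\<Union>\<T>)" .
  show "convex hull (\<Union>\<T>) \<subseteq> convex hull K"
    using assms(2) by (intro hull_minimal) auto
qed

definition bilinear_set :: "real^'n \<Rightarrow> real^'n \<Rightarrow> real^'n \<Rightarrow> real^'n \<Rightarrow> real^'n \<Rightarrow> ((real^'n) \<times> (real^'n)) set" where
  "bilinear_set a xl xu yl yu = {(x, y). (\<Sum>i\<in>UNIV. a $ i * x $ i * y $ i) = 0
      \<and> (\<forall>i. xl $ i \<le> x $ i \<and> x $ i \<le> xu $ i) \<and> (\<forall>i. yl $ i \<le> y $ i \<and> y $ i \<le> yu $ i)}"

lemma compact_bilinear_set: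
  fixes a xl xu yl yu :: "real^'n"
  shows "compact (bilinear_set a xl xu yl yu)"
proof -
  have "bilinear_set a xl xu yl yu = {z. (\<Sum>i\<in>UNIV. a $ i * fst z $ i * snd z $ i) = 0} \<inter> cbox (xl, yl) (xu, yu)"
    by (auto simp: bilinear_set_def cbox_Pair_eq mem_box_cart)
  moreover have "closed {z :: (real^'n) \<times> (real^'n). (\<Sum>i\<in>UNIV. a $ i * fst z $ i * snd z $ i) = 0}"
    by (intro closed_Collect_eq continuous_intros)
  ultimately show ?thesis
    by (simp add: compact_eq_bounded_closed bounded_Int bounded_cbox closed_Int closed_cbox)
qed

lemma extreme_point_symmetric_zero:
  fixes x d :: "'a::real_vector"
  assumes "x extreme_point_of K" "x + d \<in> K" "x - d \<in> K"
  shows "d = 0"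
proof (rule ccontr)
  assume "d \<noteq> 0"
  then have "midpoint (x - d) (x + d) \<in> open_segment (x - d) (x + d)"
    by (auto simp: algebra_simps simp flip: scaleR_2)
  moreover have "midpoint (x - d) (x + d) = x"
    by (simp add: midpoint_def scaleR_add_right[symmetric])
  ultimately show False
    using assms by (auto simp: extreme_point_of_def)
qed

lemma eventually_in_box_cart:
  fixes x lo hi d :: "real^'n"
  assumes "\<forall>m. lo $ m \<le> x $ m \<and> x $ m \<le> hi $ m" "\<forall>m. d $ m \<noteq> 0 \<longrightarrow> lo $ m < x $ m \<and> x $ m < hi $ m"
  shows "\<forall>\<^sub>F c in nhds 0. \<forall>m. lo $ m \<le> (x + c *\<^sub>R d) $ m \<and> (x + c *\<^sub>R d) $ m \<le> hi $ m"
proof (rule eventually_all_finite)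
  fix m
  show "\<forall>\<^sub>F c in nhds 0. lo $ m \<le> (x + c *\<^sub>R d) $ m \<and> (x + c *\<^sub>R d) $ m \<le> hi $ m"
  proof (cases "d $ m = 0")
    case True
    then show ?thesis
      using assms(1) by simp
  next
    case False
    have "((\<lambda>c. x $ m + c * d $ m) \<longlongrightarrow> x $ m) (nhds 0)"
      by (auto intro!: tendsto_eq_intros filterlim_ident)
    moreover have "lo $ m < x $ m" "x $ m < hi $ m"
      using assms(2) False by auto
    ultimately have "\<forall>\<^sub>F c in nhds 0. lo $ m < x $ m + c * d $ m \<and> x $ m + c * d $ m < hi $ m"
      by (intro eventually_conj order_tendstoD)
    then show ?thesis
      by eventually_elim auto
  qed
qed

lemma bilinear_set_line_not_extreme:
  fixes a xl xu yl yu X Y dX dY :: "real^'n"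
  assumes S: "(X, Y) \<in> bilinear_set a xl xu yl yu" and "(dX, dY) \<noteq> 0"
    and quadratic: "\<forall>m. dX $ m * dY $ m = 0"
    and linear: "(\<Sum>m\<in>UNIV. a $ m * (X $ m * dY $ m + dX $ m * Y $ m)) = 0"
    and "\<forall>m. dX $ m \<noteq> 0 \<longrightarrow> xl $ m < X $ m \<and> X $ m < xu $ m"
    and "\<forall>m. dY $ m \<noteq> 0 \<longrightarrow> yl $ m < Y $ m \<and> Y $ m < yu $ m"
  shows "\<not> (X, Y) extreme_point_of convex hull (bilinear_set a xl xu yl yu)"
proof
  assume ext: "(X, Y) extreme_point_of convex hull (bilinear_set a xl xu yl yu)"
  have curve: "(\<Sum>m\<in>UNIV. a $ m * (X + c *\<^sub>R dX) $ m * (Y + c *\<^sub>R dY) $ m) = 0" for c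
  proof -
    have "(\<Sum>m\<in>UNIV. a $ m * (X + c *\<^sub>R dX) $ m * (Y + c *\<^sub>R dY) $ m)
        = (\<Sum>m\<in>UNIV. a $ m * X $ m * Y $ m) + c * (\<Sum>m\<in>UNIV. a $ m * (X $ m * dY $ m + dX $ m * Y $ m))
          + c\<^sup>2 * (\<Sum>m\<in>UNIV. a $ m * (dX $ m * dY $ m))"
      by (simp add: sum.distrib sum_distrib_left algebra_simps power2_eq_square)
    then show ?thesis
      using S linear quadratic by (simp add: bilinear_set_def)
  qed
  have "\<forall>\<^sub>F c in nhds 0. (\<forall>m. xl $ m \<le> (X + c *\<^sub>R dX) $ m \<and> (X + c *\<^sub>R dX) $ m \<le> xu $ m)
      \<and> (\<forall>m. yl $ m \<le> (Y + c *\<^sub>R dY) $ m \<and> (Y + c *\<^sub>R dY) $ m \<le> yu $ m)"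
    using S assms(5,6) by (intro eventually_conj eventually_in_box_cart) (auto simp: bilinear_set_def)
  then obtain e where "0 < e" and box: "\<And>c. dist c 0 < e \<Longrightarrow>
      (\<forall>m. xl $ m \<le> (X + c *\<^sub>R dX) $ m \<and> (X + c *\<^sub>R dX) $ m \<le> xu $ m)
      \<and> (\<forall>m. yl $ m \<le> (Y + c *\<^sub>R dY) $ m \<and> (Y + c *\<^sub>R dY) $ m \<le> yu $ m)"
    unfolding eventually_nhds_metric by blast
  have "(X, Y) + c *\<^sub>R (dX, dY) \<in> convex hull (bilinear_set a xl xu yl yu)" if "\<bar>c\<bar> < e" for c
    using box[of c] that curve[of c] by (intro hull_inc) (simp add: bilinear_set_def)
  from this[of "e / 2"] this[of "- e / 2"] \<open>0 < e\<close> have "(e / 2) *\<^sub>R (dX, dY) = 0"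
    by (intro extreme_point_symmetric_zero[OF ext]) simp_all
  with \<open>0 < e\<close> \<open>(dX, dY) \<noteq> 0\<close> show False
    by (simp add: zero_prod_def)
qed

lemma bilinear_set_two_free_not_extreme:
  fixes a xl xu yl yu X Y :: "real^'n"
  assumes S: "(X, Y) \<in> bilinear_set a xl xu yl yu" and "l1 \<noteq> l2"
    and free: "\<And>l. l \<in> {l1, l2} \<Longrightarrow> (xl $ l < X $ l \<and> X $ l < xu $ l) \<or> (yl $ l < Y $ l \<and> Y $ l < yu $ l)"
  shows "\<not> (X, Y) extreme_point_of convex hull (bilinear_set a xl xu yl yu)"
proof -
  \<comment> \<open>At l_j we move the y-coordinate if b_j, the x-coordinate otherwise; the constraint then
    changes at rate G_j per unit step, so the step (\<alpha>, \<beta>) with \<alpha> G_1 + \<beta> G_2 = 0 keeps it.\<close>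
  define b1 b2 where "b1 \<longleftrightarrow> \<not> (xl $ l1 < X $ l1 \<and> X $ l1 < xu $ l1)"
    and "b2 \<longleftrightarrow> \<not> (xl $ l2 < X $ l2 \<and> X $ l2 < xu $ l2)"
  define G1 G2 where "G1 = a $ l1 * (if b1 then X $ l1 else Y $ l1)"
    and "G2 = a $ l2 * (if b2 then X $ l2 else Y $ l2)"
  define \<alpha> \<beta> where "\<alpha> = (if G1 = 0 \<and> G2 = 0 then 1 else G2)" and "\<beta> = (if G1 = 0 \<and> G2 = 0 then 0 else - G1)"
  define dX :: "real^'n" where
    "dX = (\<chi> m. (if m = l1 \<and> \<not> b1 then \<alpha> else 0) + (if m = l2 \<and> \<not> b2 then \<beta> else 0))"
  define dY :: "real^'n" where
    "dY = (\<chi> m. (if m = l1 \<and> b1 then \<alpha> else 0) + (if m = l2 \<and> b2 then \<beta> else 0))"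
  show ?thesis
  proof (rule bilinear_set_line_not_extreme[OF S])
    have "dX $ l1 \<noteq> 0 \<or> dY $ l1 \<noteq> 0 \<or> dX $ l2 \<noteq> 0 \<or> dY $ l2 \<noteq> 0"
      using \<open>l1 \<noteq> l2\<close> unfolding dX_def dY_def \<alpha>_def \<beta>_def by (cases b1; cases b2) auto
    then show "(dX, dY) \<noteq> 0"
      by (auto simp: zero_prod_def)
    show "\<forall>m. dX $ m * dY $ m = 0"
      using \<open>l1 \<noteq> l2\<close> by (simp add: dX_def dY_def)
    have "(\<Sum>m\<in>UNIV. a $ m * (X $ m * dY $ m + dX $ m * Y $ m))
        = (\<Sum>m\<in>UNIV. (if m = l1 then \<alpha> * G1 else 0) + (if m = l2 then \<beta> * G2 else 0))"
      using \<open>l1 \<noteq> l2\<close> by (intro sum.cong) (auto simp: dX_def dY_def G1_def G2_def algebra_simps)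
    also have "\<dots> = 0"
      by (simp add: sum.distrib \<alpha>_def \<beta>_def)
    finally show "(\<Sum>m\<in>UNIV. a $ m * (X $ m * dY $ m + dX $ m * Y $ m)) = 0" .
    show "\<forall>m. dX $ m \<noteq> 0 \<longrightarrow> xl $ m < X $ m \<and> X $ m < xu $ m"
      by (auto simp: dX_def b1_def b2_def)
    show "\<forall>m. dY $ m \<noteq> 0 \<longrightarrow> yl $ m < Y $ m \<and> Y $ m < yu $ m"
      using free by (auto simp: dY_def b1_def b2_def)
  qed
qed

lemma extreme_point_bilinear_set:
  fixes a xl xu yl yu X Y :: "real^'n"
  assumes ext: "(X, Y) extreme_point_of convex hull (bilinear_set a xl xu yl yu)"
  shows "\<exists>i. \<forall>l. l \<noteq> i \<longrightarrow> (X $ l = xl $ l \<or> X $ l = xu $ l) \<and> (Y $ l = yl $ l \<or> Y $ l = yu $ l)"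
proof (rule ccontr)
  assume "\<not> ?thesis"
  then obtain l1 l2 where "l1 \<noteq> l2"
    and not_at_bounds: "\<And>l. l \<in> {l1, l2} \<Longrightarrow> \<not> ((X $ l = xl $ l \<or> X $ l = xu $ l) \<and> (Y $ l = yl $ l \<or> Y $ l = yu $ l))"
    by (metis insert_iff singletonD)
  have S: "(X, Y) \<in> bilinear_set a xl xu yl yu"
    using ext extreme_point_of_convex_hull by blast
  then have "(xl $ l < X $ l \<and> X $ l < xu $ l) \<or> (yl $ l < Y $ l \<and> Y $ l < yu $ l)" if "l \<in> {l1, l2}" for l
    using not_at_bounds[OF that] by (force simp: bilinear_set_def order_le_less)
  with bilinear_set_two_free_not_extreme[OF S \<open>l1 \<noteq> l2\<close>] ext show False
    by blast
qed

section \<open>Slices through the corners\<close>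

text \<open>The coordinates other than i are put at the bounds chosen by fx, fy; coordinate i is 0,
  so the slice through the corner is parametrised by (x_i, y_i).\<close>

definition corner :: "real^'n \<Rightarrow> real^'n \<Rightarrow> real^'n \<Rightarrow> real^'n \<Rightarrow> 'n \<Rightarrow> ('n \<Rightarrow> bool) \<Rightarrow> ('n \<Rightarrow> bool)
    \<Rightarrow> (real^'n) \<times> (real^'n)" where
  "corner xl xu yl yu i fx fy =
     ((\<chi> l. if l = i then 0 else if fx l then xu $ l else xl $ l),
      (\<chi> l. if l = i then 0 else if fy l then yu $ l else yl $ l))"

definition slice_level :: "real^'n \<Rightarrow> (real^'n) \<times> (real^'n) \<Rightarrow> 'n \<Rightarrow> real" where
  "slice_level a v i = - (\<Sum>l\<in>UNIV. a $ l * fst v $ l * snd v $ l) / a $ i"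

definition slice_pieces :: "real^'n \<Rightarrow> real^'n \<Rightarrow> real^'n \<Rightarrow> real^'n \<Rightarrow> real^'n \<Rightarrow> 'n \<Rightarrow> ('n \<Rightarrow> bool) \<Rightarrow> ('n \<Rightarrow> bool)
    \<Rightarrow> ((real^'n) \<times> (real^'n)) placed list" where
  "slice_pieces a xl xu yl yu i fx fy =
     rect_hyperbola_pieces (corner xl xu yl yu i fx fy) (axis i 1, 0) (0, axis i 1)
       (slice_level a (corner xl xu yl yu i fx fy) i) (xl $ i) (xu $ i) (yl $ i) (yu $ i)"

lemma wf_slice_pieces: "P \<in> set (slice_pieces a xl xu yl yu i fx fy) \<Longrightarrow> wf_piece (shape P)"
  unfolding slice_pieces_def by (rule wf_rect_hyperbola_pieces)

lemma bilinear_form_slice: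
  fixes a xl xu yl yu :: "real^'n"
  assumes "a $ i \<noteq> 0" "p = corner xl xu yl yu i fx fy + s *\<^sub>R (axis i 1, 0) + t *\<^sub>R (0, axis i 1)"
  shows "(\<Sum>l\<in>UNIV. a $ l * fst p $ l * snd p $ l) = a $ i * (s * t - slice_level a (corner xl xu yl yu i fx fy) i)"
proof -
  define v where "v = corner xl xu yl yu i fx fy"
  have "(\<Sum>l\<in>UNIV. a $ l * fst p $ l * snd p $ l)
      = (\<Sum>l\<in>UNIV. a $ l * fst v $ l * snd v $ l + (if l = i then a $ i * s * t else 0))"
    unfolding assms(2) by (intro sum.cong) (auto simp: v_def corner_def axis_def)
  also have "\<dots> = a $ i * (s * t - slice_level a v i)"
    using assms(1) by (simp add: sum.distrib slice_level_def field_simps)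
  finally show ?thesis
    by (simp add: v_def)
qed

lemma slice_point_mem_bilinear_set:
  fixes a xl xu yl yu :: "real^'n"
  assumes "a $ i \<noteq> 0" "\<forall>l. xl $ l < xu $ l" "\<forall>l. yl $ l < yu $ l"
    and "xl $ i \<le> s" "s \<le> xu $ i" "yl $ i \<le> t" "t \<le> yu $ i"
    and "s * t = slice_level a (corner xl xu yl yu i fx fy) i"
  shows "corner xl xu yl yu i fx fy + s *\<^sub>R (axis i 1, 0) + t *\<^sub>R (0, axis i 1) \<in> bilinear_set a xl xu yl yu"
proof -
  let ?p = "corner xl xu yl yu i fx fy + s *\<^sub>R (axis i 1, 0) + t *\<^sub>R (0, axis i 1)"
  have "(\<Sum>l\<in>UNIV. a $ l * fst ?p $ l * snd ?p $ l) = 0"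
    using bilinear_form_slice[OF assms(1) refl] assms(8) by simp
  moreover have "xl $ l \<le> fst ?p $ l \<and> fst ?p $ l \<le> xu $ l" "yl $ l \<le> snd ?p $ l \<and> snd ?p $ l \<le> yu $ l" for l
    using assms(2-7) by (auto simp: corner_def axis_def less_imp_le)
  ultimately show ?thesis
    unfolding bilinear_set_def by (simp add: case_prod_beta)
qed

lemma slice_pieces_subset_hull:
  fixes a xl xu yl yu :: "real^'n"
  assumes "a $ i \<noteq> 0" "\<forall>l. xl $ l < xu $ l" "\<forall>l. yl $ l < yu $ l"
    and "P \<in> set (slice_pieces a xl xu yl yu i fx fy)"
  shows "placed_set P \<subseteq> convex hull (bilinear_set a xl xu yl yu)"
  using assms(4)[unfolded slice_pieces_def] convex_convex_hull
proof (rule rect_hyperbola_pieces_subset)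
  show "xl $ i \<le> xu $ i" "yl $ i \<le> yu $ i"
    using assms(2,3) by (simp_all add: less_imp_le)
  show "corner xl xu yl yu i fx fy + s *\<^sub>R (axis i 1, 0) + t *\<^sub>R (0, axis i 1) \<in> convex hull (bilinear_set a xl xu yl yu)"
    if "xl $ i \<le> s" "s \<le> xu $ i" "yl $ i \<le> t" "t \<le> yu $ i" "s * t = slice_level a (corner xl xu yl yu i fx fy) i"
    for s t
    using slice_point_mem_bilinear_set[OF assms(1-3) that] by (rule hull_inc)
qed

lemma slice_pieces_cover:
  fixes a xl xu yl yu X Y :: "real^'n"
  assumes "a $ i \<noteq> 0" and S: "(X, Y) \<in> bilinear_set a xl xu yl yu"
    and at_bounds: "\<forall>l. l \<noteq> i \<longrightarrow> (X $ l = xl $ l \<or> X $ l = xu $ l) \<and> (Y $ l = yl $ l \<or> Y $ l = yu $ l)"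
  shows "\<exists>fx fy. \<exists>P\<in>set (slice_pieces a xl xu yl yu i fx fy). (X, Y) \<in> placed_set P"
proof -
  define fx fy where "fx l \<longleftrightarrow> X $ l = xu $ l" and "fy l \<longleftrightarrow> Y $ l = yu $ l" for l
  define v where "v = corner xl xu yl yu i fx fy"
  define s t where "s = X $ i" and "t = Y $ i"
  have "X $ l = fst (v + s *\<^sub>R (axis i 1, 0) + t *\<^sub>R (0, axis i 1)) $ l"
    "Y $ l = snd (v + s *\<^sub>R (axis i 1, 0) + t *\<^sub>R (0, axis i 1)) $ l" for l
    using at_bounds[rule_format, of l] by (auto simp: v_def corner_def fx_def fy_def s_def t_def axis_def)
  then have XY: "(X, Y) = v + s *\<^sub>R (axis i 1, 0) + t *\<^sub>R (0, axis i 1)"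
    by (simp add: prod_eq_iff vec_eq_iff)
  have "a $ i * (s * t - slice_level a v i) = 0"
    using S bilinear_form_slice[OF assms(1) XY[unfolded v_def]] by (simp add: bilinear_set_def v_def)
  then have "s * t = slice_level a v i"
    using assms(1) by simp
  moreover have "xl $ i \<le> s" "s \<le> xu $ i" "yl $ i \<le> t" "t \<le> yu $ i"
    using S by (auto simp: bilinear_set_def s_def t_def)
  ultimately have "\<exists>P\<in>set (slice_pieces a xl xu yl yu i fx fy). (X, Y) \<in> placed_set P"
    unfolding slice_pieces_def v_def[symmetric] XY by (intro rect_hyperbola_pieces_cover)
  then show ?thesis
    by blast
qed

definition bilinear_pieces :: "real^'n \<Rightarrow> real^'n \<Rightarrow> real^'n \<Rightarrow> real^'n \<Rightarrow> real^'n \<Rightarrow> ((real^'n) \<times> (real^'n)) placed set" where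
  "bilinear_pieces a xl xu yl yu =
     {P. piece_region (shape P) \<noteq> {} \<and> (\<exists>i fx fy. P \<in> set (slice_pieces a xl xu yl yu i fx fy))}"

lemma finite_bilinear_pieces: "finite (bilinear_pieces a xl xu yl yu)"
proof (rule finite_subset)
  show "bilinear_pieces a xl xu yl yu \<subseteq> (\<Union>(i, fx, fy). set (slice_pieces a xl xu yl yu i fx fy))"
    by (auto simp: bilinear_pieces_def)
qed auto

lemma bilinear_pieces_subset_hull:
  fixes a xl xu yl yu :: "real^'n"
  assumes "\<forall>i. a $ i \<noteq> 0" "\<forall>l. xl $ l < xu $ l" "\<forall>l. yl $ l < yu $ l"
    and "P \<in> bilinear_pieces a xl xu yl yu"
  shows "placed_set P \<subseteq> convex hull (bilinear_set a xl xu yl yu)"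
  using assms(4) slice_pieces_subset_hull[OF assms(1)[rule_format] assms(2,3)]
  unfolding bilinear_pieces_def by blast

lemma extreme_points_bilinear_set_covered:
  fixes a xl xu yl yu :: "real^'n"
  assumes "\<forall>i. a $ i \<noteq> 0"
  shows "{x. x extreme_point_of convex hull (bilinear_set a xl xu yl yu)}
           \<subseteq> (\<Union>P\<in>bilinear_pieces a xl xu yl yu. placed_set P)"
proof clarify
  fix X Y
  assume ext: "(X, Y) extreme_point_of convex hull (bilinear_set a xl xu yl yu)"
  obtain i where "\<forall>l. l \<noteq> i \<longrightarrow> (X $ l = xl $ l \<or> X $ l = xu $ l) \<and> (Y $ l = yl $ l \<or> Y $ l = yu $ l)"
    using extreme_point_bilinear_set[OF ext] by blast
  then obtain fx fy P where "P \<in> set (slice_pieces a xl xu yl yu i fx fy)" "(X, Y) \<in> placed_set P"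
    using slice_pieces_cover[OF assms[rule_format] extreme_point_of_convex_hull[OF ext]] by blast
  moreover from this have "P \<in> bilinear_pieces a xl xu yl yu"
    unfolding bilinear_pieces_def placed_set_def by blast
  ultimately show "(X, Y) \<in> (\<Union>P\<in>bilinear_pieces a xl xu yl yu. placed_set P)"
    by blast
qed

theorem theorem2:
  fixes a xl xu yl yu :: "real ^ 'n"
  assumes "\<forall>i. a $ i \<noteq> 0"
    and "\<forall>i. xl $ i < xu $ i"
    and "\<forall>i. yl $ i < yu $ i"
  shows "soc_representable
           (convex hull {(x :: real ^ 'n, y :: real ^ 'n).
              (\<Sum>i\<in>UNIV. a $ i * x $ i * y $ i) = 0
              \<and> (\<forall>i. xl $ i \<le> x $ i \<and> x $ i \<le> xu $ i)
              \<and> (\<forall>i. yl $ i \<le> y $ i \<and> y $ i \<le> yu $ i)})"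
proof -
  have "convex hull (bilinear_set a xl xu yl yu) = convex hull (\<Union>P\<in>bilinear_pieces a xl xu yl yu. placed_set P)"
  proof (rule convex_hull_eq_convex_hull_Union[OF compact_bilinear_set])
    show "T \<subseteq> convex hull (bilinear_set a xl xu yl yu)" if "T \<in> placed_set ` bilinear_pieces a xl xu yl yu" for T
      using that bilinear_pieces_subset_hull[OF assms] by blast
  qed (rule extreme_points_bilinear_set_covered[OF assms(1)])
  moreover have "soc_representable (convex hull (\<Union>P\<in>bilinear_pieces a xl xu yl yu. placed_set P))"
    by (intro soc_representable_convex_hull_placed finite_bilinear_pieces) (auto simp: bilinear_pieces_def wf_slice_pieces)
  ultimately show ?thesis
    by (simp only: bilinear_set_def)
qed

end
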